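(* There exist two upper semicomputable symmetric functions $E_1,E_2$ from pairs of binary strings to $\mathbb{N}\cup\{\infty\}$, each of which satisfies the triangle inequality and the condition that there is a constant $c$ with $\#\{y : E_i(x,y)<n\}\le c2^n$ for all integers $n$ and strings $x$, such that no non-negative function $E$ on pairs of binary strings that is bounded by both $E_1$ and $E_2$ satisfies both this counting condition (for some constant $c$) and the triangle inequality.
   Context: A function $E$ is upper semicomputable if the set of triples $(x,y,n)$ with $E(x,y)<n$ is computably enumerable. The triangle inequality means $E(x,z)\le E(x,y)+E(y,z)$ for all strings $x,y,z$. *)

theory Defs
  imports Complex_Main "HOL-Library.Extended_Real"
begin

datatype prim_fn = Zero | Succ | Proj nat | Comp prim_fn "prim_fn list" | Prec prim_fn prim_fn

fun pr_eval :: "prim_fn \<Rightarrow> nat list \<Rightarrow> nat" where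
  "pr_eval Zero xs = 0"
| "pr_eval Succ xs = (case xs of [] \<Rightarrow> 1 | x # _ \<Rightarrow> Suc x)"
| "pr_eval (Proj i) xs = (if i < length xs then xs ! i else 0)"
| "pr_eval (Comp f gs) xs = pr_eval f (map (\<lambda>g. pr_eval g xs) gs)"
| "pr_eval (Prec f g) xs = (case xs of
       [] \<Rightarrow> pr_eval f []
     | n # ys \<Rightarrow> rec_nat (pr_eval f ys) (\<lambda>k r. pr_eval g (k # r # ys)) n)"

type_synonym bstring = "bool list"

text \<open>Bijective base-2 numbering of binary strings (a bijection bool list -> nat).\<close>
fun str_code :: "bstring \<Rightarrow> nat" where
  "str_code [] = 0"
| "str_code (b # bs) = 2 * str_code bs + (if b then 2 else 1)"

text \<open>A relation on triples is computably enumerable iff it is the projection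
  of a primitive recursive relation (Kleene normal form).\<close>
definition upper_semicomputable :: "(bstring \<Rightarrow> bstring \<Rightarrow> enat) \<Rightarrow> bool" where
  "upper_semicomputable E \<longleftrightarrow>
     (\<exists>p. \<forall>x y (n::nat). E x y < enat n \<longleftrightarrow>
            (\<exists>t. pr_eval p [str_code x, str_code y, n, t] = 0))"

definition symmetric_fn :: "('a \<Rightarrow> 'a \<Rightarrow> 'b) \<Rightarrow> bool" where
  "symmetric_fn E \<longleftrightarrow> (\<forall>x y. E x y = E y x)"

definition triangle_ineq :: "('a \<Rightarrow> 'a \<Rightarrow> 'b::{plus,ord}) \<Rightarrow> bool" where
  "triangle_ineq E \<longleftrightarrow> (\<forall>x y z. E x z \<le> E x y + E y z)"

text \<open>Counting condition: some constant c with #{y. E(x,y) < n} <= c 2^n for all n, x.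
  (Only n >= 1 matters since E is non-negative; the set is required to be finite.)\<close>
definition count_cond :: "(bstring \<Rightarrow> bstring \<Rightarrow> ereal) \<Rightarrow> bool" where
  "count_cond E \<longleftrightarrow> (\<exists>c::real. \<forall>x (n::nat).
      finite {y. E x y < ereal (real n)} \<and> real (card {y. E x y < ereal (real n)}) \<le> c * 2 ^ n)"

end

theory Submission
  imports Defs
begin

text \<open>Split the codes of binary strings into consecutive pairs in two ways, \<open>{0,1},{2,3},\<dots>\<close>
  and \<open>{0},{1,2},{3,4},\<dots>\<close>, and let \<open>E\<^sub>s(x,y)\<close> be \<open>0\<close> if \<open>x\<close> and \<open>y\<close> lie in the same pair
  of the \<open>s\<close>-th partition and \<open>\<infinity>\<close> otherwise. Both are c.e. pseudometrics whose balls have at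
  most two elements. A function below both vanishes on every pair of consecutive codes,
  so under the triangle inequality the ball of radius \<open>1\<close> around the string with code \<open>0\<close>
  contains every string, violating the counting condition.\<close>

definition pr_add :: prim_fn where
  "pr_add = Prec (Proj 0) (Comp Succ [Proj 1])"

definition pr_pred :: prim_fn where
  "pr_pred = Prec Zero (Proj 0)"

text \<open>Recursion runs on the first argument, so the arguments of \<open>x - y\<close> are swapped.\<close>
definition pr_monus :: prim_fn where
  "pr_monus = Comp (Prec (Proj 0) (Comp pr_pred [Proj 1])) [Proj 1, Proj 0]"

lemma pr_eval_pr_add: "pr_eval pr_add [x, y] = x + y"
  unfolding pr_add_def by (induction x) auto

lemma pr_eval_pr_pred: "pr_eval pr_pred [x] = x - 1"
  unfolding pr_pred_def by (cases x) auto

lemma pr_eval_pr_monus: "pr_eval pr_monus [x, y] = x - y"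
proof -
  have "pr_eval (Prec (Proj 0) (Comp pr_pred [Proj 1])) [y, x] = x - y"
    by (induction y) (auto simp: pr_eval_pr_pred)
  then show ?thesis
    unfolding pr_monus_def by simp
qed

definition pr_plus :: "prim_fn \<Rightarrow> prim_fn \<Rightarrow> prim_fn" where
  "pr_plus f g = Comp pr_add [f, g]"

definition pr_minus :: "prim_fn \<Rightarrow> prim_fn \<Rightarrow> prim_fn" where
  "pr_minus f g = Comp pr_monus [f, g]"

definition pr_const :: "nat \<Rightarrow> prim_fn" where
  "pr_const c = ((\<lambda>f. Comp Succ [f]) ^^ c) Zero"

lemma pr_eval_pr_plus [simp]: "pr_eval (pr_plus f g) xs = pr_eval f xs + pr_eval g xs"
  unfolding pr_plus_def by (simp add: pr_eval_pr_add)

lemma pr_eval_pr_minus [simp]: "pr_eval (pr_minus f g) xs = pr_eval f xs - pr_eval g xs"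
  unfolding pr_minus_def by (simp add: pr_eval_pr_monus)

lemma pr_eval_pr_const [simp]: "pr_eval (pr_const c) xs = c"
  unfolding pr_const_def by (induction c) auto

lemma div_2_eq_iff_monus: "u div 2 = t \<longleftrightarrow> (t + t - u) + (u - Suc (t + t)) = (0::nat)"
  by auto

definition pr_half_defect :: "prim_fn \<Rightarrow> prim_fn \<Rightarrow> prim_fn" where
  "pr_half_defect u t =
     pr_plus (pr_minus (pr_plus t t) u) (pr_minus u (Comp Succ [pr_plus t t]))"

lemma pr_eval_pr_half_defect_eq_0_iff:
  "pr_eval (pr_half_defect u t) xs = 0 \<longleftrightarrow> pr_eval u xs div 2 = pr_eval t xs"
  unfolding pr_half_defect_def div_2_eq_iff_monus by simp

function str_decode :: "nat \<Rightarrow> bstring" where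
  "str_decode n = (if n = 0 then [] else even n # str_decode ((n - 1) div 2))"
  by auto
termination
  by (relation "measure id") auto

declare str_decode.simps [simp del]

lemma str_code_str_decode [simp]: "str_code (str_decode n) = n"
proof (induction n rule: str_decode.induct)
  case (1 n)
  then show ?case
    by (subst str_decode.simps) (auto elim: evenE oddE)
qed

lemma str_decode_str_code [simp]: "str_decode (str_code x) = x"
proof (induction x)
  case (Cons b x)
  then show ?case
    by (subst str_decode.simps) auto
qed (simp add: str_decode.simps)

lemma inj_str_code: "inj str_code"
  by (metis injI str_decode_str_code)

lemma inj_str_decode: "inj str_decode"
  by (metis injI str_code_str_decode)

definition fibre_dist :: "('a \<Rightarrow> 'b) \<Rightarrow> 'a \<Rightarrow> 'a \<Rightarrow> enat" where
  "fibre_dist f x y = (if f x = f y then 0 else \<infinity>)"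

lemma fibre_dist_eq_0: "f x = f y \<Longrightarrow> fibre_dist f x y = 0"
  unfolding fibre_dist_def by simp

lemma symmetric_fn_fibre_dist: "symmetric_fn (fibre_dist f)"
  unfolding symmetric_fn_def fibre_dist_def by auto

lemma triangle_ineq_fibre_dist: "triangle_ineq (fibre_dist f)"
  unfolding triangle_ineq_def fibre_dist_def by auto

lemma fibre_dist_ball:
  "{y. ereal_of_enat (fibre_dist f x y) < ereal (real n)} = (if n = 0 then {} else {y. f y = f x})"
  by (auto simp: fibre_dist_def zero_ereal_def zero_enat_def)

lemma count_cond_fibre_dist:
  assumes "\<And>x. finite {y. f y = f x}" and "\<And>x. card {y. f y = f x} \<le> k"
  shows "count_cond (\<lambda>x y. ereal_of_enat (fibre_dist f x y))"
  unfolding count_cond_def fibre_dist_ball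
proof (intro exI[of _ "real k"] allI conjI)
  fix x and n :: nat
  show "finite (if n = 0 then {} else {y. f y = f x})"
    using assms(1) by simp
  have "real k * 1 \<le> real k * 2 ^ n"
    by (rule mult_left_mono) simp_all
  then show "real (card (if n = 0 then {} else {y. f y = f x})) \<le> real k * 2 ^ n"
    using assms(2)[of x] by simp
qed

lemma upper_semicomputable_fibre_dist:
  assumes "\<And>x y. f x = f y \<longleftrightarrow> (\<exists>t. pr_eval p [str_code x, str_code y, t] = 0)"
  shows "upper_semicomputable (fibre_dist f)"
  unfolding upper_semicomputable_def
proof (intro exI allI)
  let ?q = "pr_plus (Comp p [Proj 0, Proj 1, Proj 3]) (pr_minus (pr_const 1) (Proj 2))"
  fix x y and n :: nat
  have "fibre_dist f x y < enat n \<longleftrightarrow> f x = f y \<and> 1 \<le> n"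
    by (auto simp: fibre_dist_def zero_enat_def)
  also have "\<dots> \<longleftrightarrow> (\<exists>t. pr_eval ?q [str_code x, str_code y, n, t] = 0)"
    using assms by auto
  finally show "fibre_dist f x y < enat n \<longleftrightarrow>
      (\<exists>t. pr_eval ?q [str_code x, str_code y, n, t] = 0)" .
qed

text \<open>The \<open>s\<close>-th partition of the codes into the pairs \<open>{2q - s, 2q + 1 - s}\<close>.\<close>
definition code_pair :: "nat \<Rightarrow> bstring \<Rightarrow> nat" where
  "code_pair s x = (str_code x + s) div 2"

lemma code_pair_eq_iff_pr:
  "code_pair s x = code_pair s y \<longleftrightarrow>
     (\<exists>t. pr_eval (pr_plus (pr_half_defect (pr_plus (Proj 0) (pr_const s)) (Proj 2))
                           (pr_half_defect (pr_plus (Proj 1) (pr_const s)) (Proj 2)))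
                  [str_code x, str_code y, t] = 0)"
proof -
  have "pr_eval (pr_half_defect (pr_plus (Proj 0) (pr_const s)) (Proj 2)) [a, b, t] = 0
      \<longleftrightarrow> (a + s) div 2 = t"
    and "pr_eval (pr_half_defect (pr_plus (Proj 1) (pr_const s)) (Proj 2)) [a, b, t] = 0
      \<longleftrightarrow> (b + s) div 2 = t" for a b t
    by (simp_all add: pr_eval_pr_half_defect_eq_0_iff)
  then show ?thesis
    unfolding code_pair_def by auto
qed

lemma upper_semicomputable_code_pair: "upper_semicomputable (fibre_dist (code_pair s))"
  using code_pair_eq_iff_pr by (rule upper_semicomputable_fibre_dist)

lemma code_pair_fibre:
  "{y. code_pair s y = code_pair s x} \<subseteq> str_code -` {2 * code_pair s x - s, Suc (2 * code_pair s x) - s}"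
  by (auto simp: code_pair_def)

lemma count_cond_code_pair: "count_cond (\<lambda>x y. ereal_of_enat (fibre_dist (code_pair s) x y))"
proof (rule count_cond_fibre_dist)
  fix x
  let ?P = "{2 * code_pair s x - s, Suc (2 * code_pair s x) - s}"
  show "finite {y. code_pair s y = code_pair s x}"
    using code_pair_fibre finite_vimageI[OF _ inj_str_code, of ?P] finite_subset by blast
  have "card {y. code_pair s y = code_pair s x} \<le> card (str_code -` ?P)"
    using code_pair_fibre finite_vimageI[OF _ inj_str_code, of ?P] by (rule card_mono[rotated]) simp
  also have "\<dots> \<le> card ?P"
    using card_vimage_inj_on_le[of str_code UNIV ?P] inj_str_code by simp
  also have "\<dots> \<le> 2"
    by (simp add: card_insert_le_m1)
  finally show "card {y. code_pair s y = code_pair s x} \<le> 2" .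
qed

lemma consecutive_code_pair: "code_pair 0 (str_decode k) = code_pair 0 (str_decode (Suc k))
    \<or> code_pair 1 (str_decode k) = code_pair 1 (str_decode (Suc k))"
  by (cases "even k") (auto simp: code_pair_def elim!: evenE oddE)

lemma triangle_ineq_chain_nonpos:
  fixes E :: "'a \<Rightarrow> 'a \<Rightarrow> 'b::ordered_comm_monoid_add"
  assumes "triangle_ineq E" and "\<And>k. E (g k) (g (Suc k)) \<le> 0"
  shows "E (g 0) (g (Suc k)) \<le> 0"
proof (induction k)
  case 0
  show ?case using assms(2) .
next
  case (Suc k)
  have "E (g 0) (g (Suc (Suc k))) \<le> E (g 0) (g (Suc k)) + E (g (Suc k)) (g (Suc (Suc k)))"
    using assms(1) unfolding triangle_ineq_def by blast
  also have "\<dots> \<le> 0"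
    using Suc assms(2) by (rule add_nonpos_nonpos)
  finally show ?case .
qed

lemma not_count_cond_if_chain_nonpos:
  fixes E :: "bstring \<Rightarrow> bstring \<Rightarrow> ereal"
  assumes "triangle_ineq E" and "\<And>k. E (g k) (g (Suc k)) \<le> 0" and "inj g"
  shows "\<not> count_cond E"
proof
  assume "count_cond E"
  then have "finite {y. E (g 0) y < ereal (real 1)}"
    unfolding count_cond_def by blast
  moreover have "range (g \<circ> Suc) \<subseteq> {y. E (g 0) y < ereal (real 1)}"
    using triangle_ineq_chain_nonpos[of E g] assms(1,2) by (force intro: le_less_trans)
  moreover have "infinite (range (g \<circ> Suc))"
    using assms(3) inj_Suc by (intro range_inj_infinite inj_compose)
  ultimately show False
    using finite_subset by blast
qed

theorem proposition3:
  shows "\<exists>E1 E2 :: bstring \<Rightarrow> bstring \<Rightarrow> enat.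
     upper_semicomputable E1 \<and> upper_semicomputable E2 \<and>
     symmetric_fn E1 \<and> symmetric_fn E2 \<and>
     triangle_ineq E1 \<and> triangle_ineq E2 \<and>
     count_cond (\<lambda>x y. ereal_of_enat (E1 x y)) \<and>
     count_cond (\<lambda>x y. ereal_of_enat (E2 x y)) \<and>
     \<not> (\<exists>E :: bstring \<Rightarrow> bstring \<Rightarrow> ereal.
          (\<forall>x y. 0 \<le> E x y) \<and>
          (\<forall>x y. E x y \<le> ereal_of_enat (E1 x y)) \<and>
          (\<forall>x y. E x y \<le> ereal_of_enat (E2 x y)) \<and>
          count_cond E \<and> triangle_ineq E)"
proof -
  have "\<not> count_cond E"
    if le0: "\<forall>x y. E x y \<le> ereal_of_enat (fibre_dist (code_pair 0) x y)"
      and le1: "\<forall>x y. E x y \<le> ereal_of_enat (fibre_dist (code_pair 1) x y)"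
      and "triangle_ineq E" for E :: "bstring \<Rightarrow> bstring \<Rightarrow> ereal"
  proof (rule not_count_cond_if_chain_nonpos)
    show "E (str_decode k) (str_decode (Suc k)) \<le> 0" for k
      using consecutive_code_pair[of k] le0 le1 by (metis fibre_dist_eq_0 ereal_of_enat_zero)
  qed (fact inj_str_decode \<open>triangle_ineq E\<close>)+
  then show ?thesis
    using upper_semicomputable_code_pair symmetric_fn_fibre_dist triangle_ineq_fibre_dist
      count_cond_code_pair
    by (intro exI[of _ "fibre_dist (code_pair 0)"] exI[of _ "fibre_dist (code_pair 1)"]) blast
qed

end
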